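(* Let $(\alpha_n)_{n\ge0}$ be complex numbers with $0<|\alpha_n|<1$ for all $n$, and let $\mu_{n,r,s}$ be as in the context. For all nonnegative integers $n,r,s$, \[ \mu_{n,r,s}=\sum_{p\in\mathrm{Sch}_{n,r,s}}\mathrm{wt}_S(p). \]
   Context: For a polynomial $f(z)=\sum_{k=0}^n a_kz^k$ of degree $n$, write $\overline{f}(z)=\sum_k\overline{a_k}z^k$ and $f^*(z)=z^n\overline{f}(1/z)$. Define monic $\Phi_n$ by $\Phi_0=1$, $\Phi_{n+1}(z)=z\Phi_n(z)-\overline{\alpha_n}\Phi_n^*(z)$. Let $\mathcal{L}$ be the unique linear functional on Laurent polynomials with $\mathcal{L}(1)=1$ and $\mathcal{L}(\Phi_m(z)\overline{\Phi_n}(1/z))=0$ for $m\neq n$; set $\langle f,g\rangle=\mathcal{L}(f(z)\overline{g}(1/z))$ and $\mu_{n,r,s}=\langle\Phi_s(z),z^n\Phi_r(z)\rangle/\langle\Phi_s,\Phi_s\rangle$. Set $\alpha_{-1}=-1$. A Schröder path is a lattice path in $\mathbb{Z}\times\mathbb{Z}_{\ge0}$ with steps $(1,1)$, $(1,0)$, $(0,-1)$; $\mathrm{Sch}_{n,r,s}$ is the set of Schröder paths from $(0,r)$ to $(n,s)$ that do not start with a vertical down-step $(0,-1)$. The weight $\mathrm{wt}_S(p)$ is the product of step weights: $(a,b)\to(a+1,b+1)$ has weight $1$; $(a,b)\to(a+1,b)$ has weight $-\overline{\alpha_{b-1}}/\overline{\alpha_b}$; $(a,b)\to(a,b-1)$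 has weight $\frac{\overline{\alpha_{b-2}}}{\overline{\alpha_{b-1}}}(1-|\alpha_{b-1}|^2)$. *)

theory Defs
  imports "HOL-Analysis.Analysis" "HOL-Computational_Algebra.Polynomial"
begin

text \<open>Verblunsky coefficients are given as alpha :: nat => complex; alpha_{-1} = -1.\<close>
definition alphaX :: "(nat \<Rightarrow> complex) \<Rightarrow> int \<Rightarrow> complex" where
  "alphaX \<alpha> k = (if k = -1 then -1 else \<alpha> (nat k))"

text \<open>f^*(z) = z^n conj(f)(1/z) with n = deg f.\<close>
definition pstar :: "complex poly \<Rightarrow> complex poly" where
  "pstar f = reflect_poly (map_poly cnj f)"

fun Phi :: "(nat \<Rightarrow> complex) \<Rightarrow> nat \<Rightarrow> complex poly" where
  "Phi \<alpha> 0 = 1"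
| "Phi \<alpha> (Suc n) = [:0, 1:] * Phi \<alpha> n - smult (cnj (\<alpha> n)) (pstar (Phi \<alpha> n))"

text \<open>A linear functional on Laurent polynomials is determined by its moments
  c k = L(z^k), k :: int.  The bilinear form <f,g> = L(f(z) conj(g)(1/z)).\<close>
definition ipL :: "(int \<Rightarrow> complex) \<Rightarrow> complex poly \<Rightarrow> complex poly \<Rightarrow> complex" where
  "ipL c f g = (\<Sum>j\<le>degree f. \<Sum>k\<le>degree g.
       coeff f j * cnj (coeff g k) * c (int j - int k))"

definition mu :: "(nat \<Rightarrow> complex) \<Rightarrow> (int \<Rightarrow> complex) \<Rightarrow> nat \<Rightarrow> nat \<Rightarrow> nat \<Rightarrow> complex" where
  "mu \<alpha> c n r s = ipL c (Phi \<alpha> s) (monom 1 n * Phi \<alpha> r) / ipL c (Phi \<alpha> s) (Phi \<alpha> s)"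

text \<open>Schroeder paths as step sequences: U = (1,1), H = (1,0), D = (0,-1).\<close>
datatype step = U | H | D

fun pvalid :: "int \<Rightarrow> step list \<Rightarrow> bool" where
  "pvalid b [] = True"
| "pvalid b (U # p) = pvalid (b + 1) p"
| "pvalid b (H # p) = pvalid b p"
| "pvalid b (D # p) = (b \<ge> 1 \<and> pvalid (b - 1) p)"

fun pend :: "int \<Rightarrow> step list \<Rightarrow> int" where
  "pend b [] = b"
| "pend b (U # p) = pend (b + 1) p"
| "pend b (H # p) = pend b p"
| "pend b (D # p) = pend (b - 1) p"

definition xlen :: "step list \<Rightarrow> nat" where
  "xlen p = length (filter (\<lambda>x. x \<noteq> D) p)"

definition Sch :: "nat \<Rightarrow> nat \<Rightarrow> nat \<Rightarrow> step list set" where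
  "Sch n r s = {p. pvalid (int r) p \<and> pend (int r) p = int s \<and> xlen p = n
                  \<and> (p = [] \<or> hd p \<noteq> D)}"

fun wtS :: "(nat \<Rightarrow> complex) \<Rightarrow> int \<Rightarrow> step list \<Rightarrow> complex" where
  "wtS \<alpha> b [] = 1"
| "wtS \<alpha> b (U # p) = wtS \<alpha> (b + 1) p"
| "wtS \<alpha> b (H # p) = (- cnj (alphaX \<alpha> (b - 1)) / cnj (alphaX \<alpha> b)) * wtS \<alpha> b p"
| "wtS \<alpha> b (D # p) = (cnj (alphaX \<alpha> (b - 2)) / cnj (alphaX \<alpha> (b - 1))
        * (1 - (cmod (alphaX \<alpha> (b - 1)))\<^sup>2)) * wtS \<alpha> (b - 1) p"

end

theory Submission
  imports Defs
begin

(* Put Psi_k = -Phi_k^* / alpha_(k-1). The Szego recursion and its reversed form give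
     z Phi_k = Psi_(k+1) + conj(h_k) Psi_k   and   Psi_(k+1) = Phi_(k+1) + conj(d_k) Psi_k,
   where h_k is the weight of a horizontal step at height k and d_k that of a down-step from
   height k+1 to k. Iterating, z^n Phi_r expands in the basis (Phi_t) with the conjugated
   weight sums of the Schroeder paths from r to t that do not start with a down-step, while
   z^n Psi_r expands with the sums over all paths. Pairing with Phi_s and using orthogonality
   leaves <Phi_s, z^n Phi_r> = (weight sum) * <Phi_s, Phi_s>, and
   <Phi_(s+1), Phi_(s+1)> = (1 - |alpha_s|^2) <Phi_s, Phi_s> is nonzero. *)

section \<open>Reversed polynomials and the Szego recursion\<close>

lemma coeff_pstar:
  "coeff (pstar f) j = (if j \<le> degree f then cnj (coeff f (degree f - j)) else 0)"
  unfolding pstar_def by (auto simp: coeff_reflect_poly degree_map_poly coeff_map_poly)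

lemma degree_pstar_le: "degree (pstar f) \<le> degree f"
  by (rule degree_le) (auto simp: coeff_pstar)

lemma pstar_1 [simp]: "pstar 1 = 1"
  by (simp add: pstar_def)

lemma Phi_monic: "coeff (Phi \<alpha> k) k = 1 \<and> (\<forall>j>k. coeff (Phi \<alpha> k) j = 0)"
proof (induction k)
  case 0
  then show ?case by (auto simp: coeff_1)
next
  case (Suc k)
  then have "degree (Phi \<alpha> k) \<le> k" by (auto intro: degree_le)
  with Suc show ?case by (auto simp: coeff_pCons coeff_pstar split: nat.splits)
qed

lemma degree_Phi [simp]: "degree (Phi \<alpha> k) = k"
  by (metis Phi_monic degree_le le_antisym le_degree zero_neq_one)

lemma pstar_Phi_Suc:
  "pstar (Phi \<alpha> (Suc k)) = pstar (Phi \<alpha> k) - smult (\<alpha> k) (pCons 0 (Phi \<alpha> k))"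
proof (rule poly_eqI)
  fix j
  have high: "coeff (Phi \<alpha> k) i = 0" if "k < i" for i
    using Phi_monic that by blast
  have "coeff (Phi \<alpha> (Suc k)) i = (if i = 0 then 0 else coeff (Phi \<alpha> k) (i - 1))
      - cnj (\<alpha> k) * (if i \<le> k then cnj (coeff (Phi \<alpha> k) (k - i)) else 0)" for i
    by (simp add: coeff_pstar coeff_pCons split: nat.splits)
  with high show "coeff (pstar (Phi \<alpha> (Suc k))) j
      = coeff (pstar (Phi \<alpha> k) - smult (\<alpha> k) (pCons 0 (Phi \<alpha> k))) j"
    by (cases j) (auto simp: coeff_pstar coeff_pCons simp del: Phi.simps split: nat.splits)
qed

section \<open>The sesquilinear form of a moment functional\<close>

lemma ipL_eq_sum_atMost:
  assumes "degree f \<le> N" "degree g \<le> M"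
  shows "ipL c f g = (\<Sum>j\<le>N. \<Sum>k\<le>M. coeff f j * cnj (coeff g k) * c (int j - int k))"
proof -
  have "(\<Sum>k\<le>M. coeff f j * cnj (coeff g k) * c (int j - int k))
      = (\<Sum>k\<le>degree g. coeff f j * cnj (coeff g k) * c (int j - int k))" for j
    by (rule sum.mono_neutral_right) (use assms in \<open>auto simp: coeff_eq_0\<close>)
  moreover have "(\<Sum>j\<le>N. \<Sum>k\<le>degree g. coeff f j * cnj (coeff g k) * c (int j - int k))
      = (\<Sum>j\<le>degree f. \<Sum>k\<le>degree g. coeff f j * cnj (coeff g k) * c (int j - int k))"
    by (rule sum.mono_neutral_right) (use assms in \<open>auto simp: coeff_eq_0\<close>)
  ultimately show ?thesis
    unfolding ipL_def by simp
qed

lemma ipL_add_left: "ipL c (f1 + f2) g = ipL c f1 g + ipL c f2 g"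
  by (subst (1 2 3) ipL_eq_sum_atMost[where N = "max (degree f1) (degree f2)" and M = "degree g"])
    (auto simp: degree_add_le ring_distribs sum.distrib)

lemma ipL_add_right: "ipL c f (g1 + g2) = ipL c f g1 + ipL c f g2"
  by (subst (1 2 3) ipL_eq_sum_atMost[where N = "degree f" and M = "max (degree g1) (degree g2)"])
    (auto simp: degree_add_le ring_distribs sum.distrib)

lemma ipL_smult_left: "ipL c (smult a f) g = a * ipL c f g"
  by (subst (1 2) ipL_eq_sum_atMost[where N = "degree f" and M = "degree g"])
    (auto simp: sum_distrib_left mult_ac)

lemma ipL_smult_right: "ipL c f (smult a g) = cnj a * ipL c f g"
  by (subst (1 2) ipL_eq_sum_atMost[where N = "degree f" and M = "degree g"])
    (auto simp: sum_distrib_left mult_ac)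

lemma ipL_diff_left: "ipL c (f1 - f2) g = ipL c f1 g - ipL c f2 g"
  using ipL_add_left[of c f1 "- f2" g] ipL_smult_left[of c "-1" f2 g]
  by (simp add: smult_minus_left)

lemma ipL_sum_right: "ipL c f (\<Sum>t\<in>T. g t) = (\<Sum>t\<in>T. ipL c f (g t))"
  by (induction T rule: infinite_finite_induct) (simp_all add: ipL_add_right ipL_def[of c f 0])

lemma ipL_pCons_0: "ipL c (pCons 0 f) (pCons 0 g) = ipL c f g"
proof -
  have "ipL c (pCons 0 f) (pCons 0 g) = (\<Sum>j\<le>Suc (degree f). \<Sum>k\<le>Suc (degree g).
      coeff (pCons 0 f) j * cnj (coeff (pCons 0 g) k) * c (int j - int k))"
    by (rule ipL_eq_sum_atMost) (auto simp: degree_pCons_le)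
  then show ?thesis
    by (simp add: ipL_def sum.atMost_Suc_shift del: sum.atMost_Suc)
qed

lemma ipL_monom_right:
  assumes "degree f \<le> N"
  shows "ipL c f (monom 1 m) = (\<Sum>j\<le>N. coeff f j * c (int j - int m))"
proof -
  have "(\<Sum>k\<le>m. coeff f j * cnj (coeff (monom 1 m) k) * c (int j - int k))
      = coeff f j * c (int j - int m)" for j
    by (subst sum.cong[OF refl, where h = "\<lambda>k. if k = m then coeff f j * c (int j - int m) else 0"])
      (auto simp: coeff_monom)
  with assms show ?thesis
    by (subst ipL_eq_sum_atMost[where N = N and M = m]) (auto simp: degree_monom_le)
qed

lemma ipL_1_left: "degree g \<le> M \<Longrightarrow> ipL c 1 g = (\<Sum>k\<le>M. cnj (coeff g k) * c (- int k))"
  by (subst ipL_eq_sum_atMost[where N = 0 and M = M]) auto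

lemma sum_atMost_reverse: "(\<Sum>j\<le>d. g (d - j)) = (\<Sum>j\<le>(d::nat). g j)"
  by (rule sum.reindex_bij_witness[where i = "\<lambda>i. d - i" and j = "\<lambda>i. d - i"]) auto

text \<open>In each of the two reflection identities below both sides apply \<open>L\<close> to the same Laurent
  polynomial: \<open>z^(-d) f(z)\<close> in the first, \<open>z^(-1) (map_poly cnj f)(1/z)\<close> in the second,
  where \<open>d = degree f\<close>.\<close>

lemma ipL_1_pstar: "ipL c 1 (pstar f) = ipL c f (monom 1 (degree f))"
proof -
  let ?d = "degree f"
  have "ipL c 1 (pstar f) = (\<Sum>k\<le>?d. cnj (coeff (pstar f) k) * c (- int k))"
    by (rule ipL_1_left) (rule degree_pstar_le)
  also have "\<dots> = (\<Sum>k\<le>?d. coeff f (?d - k) * c (int (?d - k) - int ?d))"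
    by (rule sum.cong) (auto simp: coeff_pstar)
  also have "\<dots> = (\<Sum>k\<le>?d. coeff f k * c (int k - int ?d))"
    by (rule sum_atMost_reverse)
  also have "\<dots> = ipL c f (monom 1 ?d)"
    by (rule ipL_monom_right[symmetric]) simp
  finally show ?thesis .
qed

lemma ipL_pstar_monom_Suc: "ipL c (pstar f) (monom 1 (Suc (degree f))) = ipL c 1 (pCons 0 f)"
proof -
  let ?d = "degree f"
  have "ipL c (pstar f) (monom 1 (Suc ?d)) = (\<Sum>j\<le>?d. coeff (pstar f) j * c (int j - int (Suc ?d)))"
    by (rule ipL_monom_right) (rule degree_pstar_le)
  also have "\<dots> = (\<Sum>j\<le>?d. cnj (coeff f (?d - j)) * c (- int (?d - j) - 1))"
    by (rule sum.cong) (auto simp: coeff_pstar of_nat_diff intro!: arg_cong[where f = c])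
  also have "\<dots> = (\<Sum>j\<le>?d. cnj (coeff f j) * c (- int j - 1))"
    by (rule sum_atMost_reverse)
  also have "\<dots> = ipL c 1 (pCons 0 f)"
    by (simp add: ipL_1_left[where M = "Suc ?d"] degree_pCons_le sum.atMost_Suc_shift
        del: sum.atMost_Suc) (auto intro!: sum.cong arg_cong[where f = c])
  finally show ?thesis .
qed

section \<open>Norms of the orthogonal polynomials\<close>

context
  fixes \<alpha> :: "nat \<Rightarrow> complex" and c :: "int \<Rightarrow> complex"
  assumes orth: "\<And>m k. m \<noteq> k \<Longrightarrow> ipL c (Phi \<alpha> m) (Phi \<alpha> k) = 0"
begin

lemma Phi_orthogonal_lower_degree:
  assumes "\<And>k. d \<le> k \<Longrightarrow> coeff g k = 0" and "d \<le> s"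
  shows "ipL c (Phi \<alpha> s) g = 0"
  using assms
proof (induction d arbitrary: g)
  case 0
  then have "g = 0" by (intro poly_eqI) simp
  then show ?case by (simp add: ipL_def)
next
  case (Suc d)
  define h where "h = g - smult (coeff g d) (Phi \<alpha> d)"
  have "coeff h k = 0" if "d \<le> k" for k
    using Suc.prems(1) that Phi_monic[of \<alpha> d] by (cases "k = d") (auto simp: h_def)
  with Suc have "ipL c (Phi \<alpha> s) h = 0" by simp
  moreover have "g = h + smult (coeff g d) (Phi \<alpha> d)" by (simp add: h_def)
  ultimately show ?case
    using orth[of s d] Suc.prems(2)
    by (metis ipL_add_right ipL_smult_right add.right_neutral mult_zero_right Suc_n_not_le_n)
qed

lemma ipL_Phi_self_eq_monom: "ipL c (Phi \<alpha> s) (Phi \<alpha> s) = ipL c (Phi \<alpha> s) (monom 1 s)"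
proof -
  have "ipL c (Phi \<alpha> s) (Phi \<alpha> s - monom 1 s) = 0"
    by (rule Phi_orthogonal_lower_degree[of s])
      (auto simp: coeff_monom Phi_monic le_less)
  then show ?thesis
    using ipL_add_right[of c "Phi \<alpha> s" "monom 1 s" "Phi \<alpha> s - monom 1 s"] by simp
qed

lemma ipL_Phi_self_Suc:
  "ipL c (Phi \<alpha> (Suc s)) (Phi \<alpha> (Suc s)) = ipL c (Phi \<alpha> s) (Phi \<alpha> s) * (1 - cnj (\<alpha> s) * \<alpha> s)"
proof -
  let ?\<kappa> = "ipL c (Phi \<alpha> s) (Phi \<alpha> s)"
  have zPhi: "pCons 0 (Phi \<alpha> s) = Phi \<alpha> (Suc s) + smult (cnj (\<alpha> s)) (pstar (Phi \<alpha> s))"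
    by simp
  have "ipL c (pstar (Phi \<alpha> s)) (monom 1 (Suc s)) = ipL c 1 (pCons 0 (Phi \<alpha> s))"
    using ipL_pstar_monom_Suc[of c "Phi \<alpha> s"] by simp
  also have "\<dots> = ipL c (Phi \<alpha> 0) (Phi \<alpha> (Suc s)) + \<alpha> s * ipL c 1 (pstar (Phi \<alpha> s))"
    by (subst zPhi) (simp add: ipL_add_right ipL_smult_right del: Phi.simps(2))
  also have "\<dots> = \<alpha> s * ?\<kappa>"
    using orth[of 0 "Suc s"] ipL_1_pstar[of c "Phi \<alpha> s"] ipL_Phi_self_eq_monom by simp
  finally have pstar_term: "ipL c (pstar (Phi \<alpha> s)) (monom 1 (Suc s)) = \<alpha> s * ?\<kappa>" .
  have "ipL c (Phi \<alpha> (Suc s)) (Phi \<alpha> (Suc s)) = ipL c (Phi \<alpha> (Suc s)) (monom 1 (Suc s))"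
    by (rule ipL_Phi_self_eq_monom)
  also have "\<dots> = ipL c (pCons 0 (Phi \<alpha> s)) (pCons 0 (monom 1 s))
      - cnj (\<alpha> s) * ipL c (pstar (Phi \<alpha> s)) (monom 1 (Suc s))"
    by (simp add: ipL_diff_left ipL_smult_left monom_Suc)
  also have "\<dots> = ?\<kappa> * (1 - cnj (\<alpha> s) * \<alpha> s)"
    by (simp add: pstar_term ipL_pCons_0 ipL_Phi_self_eq_monom algebra_simps)
  finally show ?thesis .
qed

lemma ipL_Phi_self_nonzero:
  assumes "c 0 = 1" and "\<And>k. cmod (\<alpha> k) < 1"
  shows "ipL c (Phi \<alpha> s) (Phi \<alpha> s) \<noteq> 0"
proof (induction s)
  case 0
  then show ?case by (simp add: ipL_def assms(1))
next
  case (Suc s)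
  have "cnj (\<alpha> s) * \<alpha> s = of_real ((cmod (\<alpha> s))\<^sup>2)"
    by (subst complex_norm_square) (simp add: mult.commute)
  moreover have "(cmod (\<alpha> s))\<^sup>2 < 1"
    using assms(2)[of s] by (simp add: abs_square_less_1)
  ultimately have "1 - cnj (\<alpha> s) * \<alpha> s \<noteq> 0"
    by (metis less_irrefl of_real_1 of_real_eq_iff right_minus_eq)
  with Suc show ?case by (simp add: ipL_Phi_self_Suc del: Phi.simps)
qed

end

section \<open>Weighted Schroeder paths\<close>

lemma alphaX_of_nat [simp]: "alphaX \<alpha> (int k) = \<alpha> k"
  by (simp add: alphaX_def)

lemma alphaX_nonzero: "(\<And>k. \<alpha> k \<noteq> 0) \<Longrightarrow> alphaX \<alpha> (int k - 1) \<noteq> 0"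
  by (cases k) (auto simp: alphaX_def)

definition wt_H :: "(nat \<Rightarrow> complex) \<Rightarrow> nat \<Rightarrow> complex" where
  "wt_H \<alpha> b = - cnj (alphaX \<alpha> (int b - 1)) / cnj (\<alpha> b)"

text \<open>\<open>wt_D \<alpha> b\<close> is the weight of a down-step from height \<open>b + 1\<close> to height \<open>b\<close>.\<close>

definition wt_D :: "(nat \<Rightarrow> complex) \<Rightarrow> nat \<Rightarrow> complex" where
  "wt_D \<alpha> b = cnj (alphaX \<alpha> (int b - 1)) / cnj (\<alpha> b) * (1 - (cmod (\<alpha> b))\<^sup>2)"

lemma wtS_Cons_U: "wtS \<alpha> (int b) (U # p) = wtS \<alpha> (int (Suc b)) p"
  by (simp add: add.commute)

lemma wtS_Cons_H: "wtS \<alpha> (int b) (H # p) = wt_H \<alpha> b * wtS \<alpha> (int b) p"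
  by (simp add: wt_H_def)

lemma wtS_Cons_D: "wtS \<alpha> (int (Suc b)) (D # p) = wt_D \<alpha> b * wtS \<alpha> (int b) p"
  by (simp add: wt_D_def)

definition Sch_all :: "nat \<Rightarrow> nat \<Rightarrow> nat \<Rightarrow> step list set" where
  "Sch_all n r s = {p. pvalid (int r) p \<and> pend (int r) p = int s \<and> xlen p = n}"

lemma finite_UNIV_step: "finite (UNIV :: step set)"
proof -
  have "(UNIV :: step set) = {U, H, D}"
    using step.exhaust by auto
  then show ?thesis
    by (metis finite.emptyI finite_insert)
qed

lemma xlen_simps [simp]:
  "xlen [] = 0" "xlen (U # p) = Suc (xlen p)" "xlen (H # p) = Suc (xlen p)" "xlen (D # p) = xlen p"
  by (simp_all add: xlen_def)

lemma length_le_if_pvalid: "pvalid b p \<Longrightarrow> length p \<le> 2 * xlen p + nat b"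
proof (induction p arbitrary: b)
  case (Cons x p)
  show ?case
  proof (cases x)
    case U
    then show ?thesis using Cons.IH[of "b + 1"] Cons.prems by auto
  next
    case H
    then show ?thesis using Cons.IH[of b] Cons.prems by auto
  next
    case D
    then show ?thesis using Cons.IH[of "b - 1"] Cons.prems by auto
  qed
qed simp

lemma finite_Sch_all: "finite (Sch_all n r s)"
proof (rule finite_subset)
  show "Sch_all n r s \<subseteq> {p. set p \<subseteq> UNIV \<and> length p \<le> 2 * n + r}"
    using length_le_if_pvalid[of "int r"] by (auto simp: Sch_all_def)
  show "finite {p. set p \<subseteq> (UNIV :: step set) \<and> length p \<le> 2 * n + r}"
    by (rule finite_lists_length_le) (simp add: finite_UNIV_step)
qed

lemma Sch_0: "Sch 0 r s = (if r = s then {[]} else {})"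
proof -
  have "p = []" if "xlen p = 0" "p = [] \<or> hd p \<noteq> D" for p
    using that by (cases p) (auto simp: xlen_def)
  then show ?thesis
    by (auto simp: Sch_def) (metis of_nat_eq_iff pend.simps(1))
qed

lemma Sch_Suc: "Sch (Suc n) r s = Cons U ` Sch_all n (Suc r) s \<union> Cons H ` Sch_all n r s"
proof (intro set_eqI iffI)
  fix p
  assume "p \<in> Sch (Suc n) r s"
  then obtain x q where "p = x # q" "x \<noteq> D" "pvalid (int r) (x # q)"
      "pend (int r) (x # q) = int s" "xlen (x # q) = Suc n"
    by (cases p) (auto simp: Sch_def)
  then show "p \<in> Cons U ` Sch_all n (Suc r) s \<union> Cons H ` Sch_all n r s"
    by (cases x) (auto simp: Sch_all_def add.commute)
qed (auto simp: Sch_def Sch_all_def add.commute)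

lemma Sch_all_0: "Sch_all n 0 s = Sch n 0 s"
proof -
  have "hd p \<noteq> D" if "pvalid 0 p" "p \<noteq> []" for p
    using that by (cases p) auto
  then show ?thesis
    by (auto simp: Sch_def Sch_all_def)
qed

lemma Sch_all_Suc: "Sch_all n (Suc r) s = Sch n (Suc r) s \<union> Cons D ` Sch_all n r s"
proof (intro set_eqI iffI)
  fix p
  assume "p \<in> Sch_all n (Suc r) s"
  then show "p \<in> Sch n (Suc r) s \<union> Cons D ` Sch_all n r s"
    by (cases p) (auto simp: Sch_def Sch_all_def)
qed (auto simp: Sch_def Sch_all_def)

definition wSch :: "(nat \<Rightarrow> complex) \<Rightarrow> nat \<Rightarrow> nat \<Rightarrow> nat \<Rightarrow> complex" where
  "wSch \<alpha> n r s = (\<Sum>p\<in>Sch n r s. wtS \<alpha> (int r) p)"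

definition wSch_all :: "(nat \<Rightarrow> complex) \<Rightarrow> nat \<Rightarrow> nat \<Rightarrow> nat \<Rightarrow> complex" where
  "wSch_all \<alpha> n r s = (\<Sum>p\<in>Sch_all n r s. wtS \<alpha> (int r) p)"

lemma wSch_0: "wSch \<alpha> 0 r s = (if r = s then 1 else 0)"
  by (simp add: wSch_def Sch_0)

lemma wSch_Suc: "wSch \<alpha> (Suc n) r s = wSch_all \<alpha> n (Suc r) s + wt_H \<alpha> r * wSch_all \<alpha> n r s"
proof -
  have "wSch \<alpha> (Suc n) r s = (\<Sum>p\<in>Cons U ` Sch_all n (Suc r) s. wtS \<alpha> (int r) p)
      + (\<Sum>p\<in>Cons H ` Sch_all n r s. wtS \<alpha> (int r) p)"
    unfolding wSch_def Sch_Suc by (rule sum.union_disjoint) (auto simp: finite_Sch_all)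
  then show ?thesis
    by (simp add: sum.reindex wSch_all_def wtS_Cons_U wtS_Cons_H sum_distrib_left del: wtS.simps)
qed

lemma wSch_all_0: "wSch_all \<alpha> n 0 s = wSch \<alpha> n 0 s"
  by (simp add: wSch_def wSch_all_def Sch_all_0)

lemma wSch_all_Suc: "wSch_all \<alpha> n (Suc r) s = wSch \<alpha> n (Suc r) s + wt_D \<alpha> r * wSch_all \<alpha> n r s"
proof -
  have "finite (Sch n (Suc r) s)"
    using finite_Sch_all[of n "Suc r" s] Sch_all_Suc by auto
  then have "wSch_all \<alpha> n (Suc r) s = wSch \<alpha> n (Suc r) s
      + (\<Sum>p\<in>Cons D ` Sch_all n r s. wtS \<alpha> (int (Suc r)) p)"
    unfolding wSch_all_def wSch_def Sch_all_Suc
    by (rule sum.union_disjoint) (auto simp: finite_Sch_all Sch_def)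
  then show ?thesis
    by (simp add: sum.reindex wSch_all_def wtS_Cons_D sum_distrib_left del: wtS.simps of_nat_Suc)
qed

section \<open>Expanding \<open>z\<^sup>n Phi\<^sub>r\<close> in the orthogonal basis\<close>

text \<open>Down-steps at the start of a path are absorbed by passing from \<open>Phi\<close> to \<open>Psi\<close>.\<close>

definition Psi :: "(nat \<Rightarrow> complex) \<Rightarrow> nat \<Rightarrow> complex poly" where
  "Psi \<alpha> k = smult (- 1 / alphaX \<alpha> (int k - 1)) (pstar (Phi \<alpha> k))"

lemma Psi_0: "Psi \<alpha> 0 = 1"
  by (simp add: Psi_def alphaX_def)

lemma Psi_Suc:
  assumes "\<And>k. \<alpha> k \<noteq> 0"
  shows "Psi \<alpha> (Suc k) = Phi \<alpha> (Suc k) + smult (cnj (wt_D \<alpha> k)) (Psi \<alpha> k)"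
proof -
  define P Q where "P = pstar (Phi \<alpha> k)" and "Q = pCons 0 (Phi \<alpha> k)"
  have Psi_Suc_PQ: "Psi \<alpha> (Suc k) = smult (- 1 / \<alpha> k) (P - smult (\<alpha> k) Q)"
    by (simp add: Psi_def P_def Q_def pstar_Phi_Suc del: Phi.simps)
  have Phi_Suc_PQ: "Phi \<alpha> (Suc k) = Q - smult (cnj (\<alpha> k)) P"
    by (simp add: P_def Q_def)
  have Psi_P: "Psi \<alpha> k = smult (- 1 / alphaX \<alpha> (int k - 1)) P"
    by (simp add: Psi_def P_def)
  have "(complex_of_real (cmod (\<alpha> k)))\<^sup>2 = \<alpha> k * cnj (\<alpha> k)"
    by (metis complex_norm_square of_real_power)
  then show ?thesis
    unfolding Psi_Suc_PQ Phi_Suc_PQ Psi_P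
    using assms[of k] alphaX_nonzero[of \<alpha> k, OF assms]
    by (intro poly_eqI) (simp add: wt_D_def field_simps)
qed

lemma pCons_0_Phi:
  assumes "\<And>k. \<alpha> k \<noteq> 0"
  shows "pCons 0 (Phi \<alpha> k) = Psi \<alpha> (Suc k) + smult (cnj (wt_H \<alpha> k)) (Psi \<alpha> k)"
proof -
  define P Q where "P = pstar (Phi \<alpha> k)" and "Q = pCons 0 (Phi \<alpha> k)"
  have Psi_Suc_PQ: "Psi \<alpha> (Suc k) = smult (- 1 / \<alpha> k) (P - smult (\<alpha> k) Q)"
    by (simp add: Psi_def P_def Q_def pstar_Phi_Suc del: Phi.simps)
  have Psi_P: "Psi \<alpha> k = smult (- 1 / alphaX \<alpha> (int k - 1)) P"
    by (simp add: Psi_def P_def)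
  show ?thesis
    unfolding Q_def[symmetric] Psi_Suc_PQ Psi_P
    using assms[of k] alphaX_nonzero[of \<alpha> k, OF assms]
    by (intro poly_eqI) (simp add: wt_H_def field_simps)
qed

lemma smult_sum_right: "smult a (\<Sum>x\<in>A. f x) = (\<Sum>x\<in>A. smult a (f x))"
  by (induction A rule: infinite_finite_induct) (simp_all add: smult_add_right)

text \<open>The expansions range over \<open>t \<le> K\<close> for an arbitrary bound \<open>K \<ge> n + b\<close>: paths cannot
  climb above \<open>n + b\<close>, and keeping \<open>K\<close> free spares us from proving this separately.\<close>

lemma monom_mult_Psi_expansion:
  assumes nz: "\<And>k. \<alpha> k \<noteq> 0"
    and Phi_exp: "\<And>b K. n + b \<le> K \<Longrightarrow>
      monom 1 n * Phi \<alpha> b = (\<Sum>t\<le>K. smult (cnj (wSch \<alpha> n b t)) (Phi \<alpha> t))"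
    and "n + b \<le> K"
  shows "monom 1 n * Psi \<alpha> b = (\<Sum>t\<le>K. smult (cnj (wSch_all \<alpha> n b t)) (Phi \<alpha> t))"
  using \<open>n + b \<le> K\<close>
proof (induction b)
  case 0
  then show ?case
    using Phi_exp[of 0 K] by (simp add: Psi_0 wSch_all_0 del: Phi.simps(2))
next
  case (Suc b)
  have "monom 1 n * Psi \<alpha> (Suc b)
      = monom 1 n * Phi \<alpha> (Suc b) + smult (cnj (wt_D \<alpha> b)) (monom 1 n * Psi \<alpha> b)"
    by (simp add: Psi_Suc[OF nz] ring_distribs del: Phi.simps)
  also have "\<dots> = (\<Sum>t\<le>K. smult (cnj (wSch \<alpha> n (Suc b) t)) (Phi \<alpha> t))
      + smult (cnj (wt_D \<alpha> b)) (\<Sum>t\<le>K. smult (cnj (wSch_all \<alpha> n b t)) (Phi \<alpha> t))"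
    using Phi_exp[of "Suc b" K] Suc by (simp del: Phi.simps)
  also have "\<dots> = (\<Sum>t\<le>K. smult (cnj (wSch_all \<alpha> n (Suc b) t)) (Phi \<alpha> t))"
    by (simp add: wSch_all_Suc smult_sum_right smult_add_left sum.distrib del: Phi.simps)
  finally show ?case .
qed

lemma monom_mult_Phi_expansion:
  assumes nz: "\<And>k. \<alpha> k \<noteq> 0" and "n + b \<le> K"
  shows "monom 1 n * Phi \<alpha> b = (\<Sum>t\<le>K. smult (cnj (wSch \<alpha> n b t)) (Phi \<alpha> t))"
  using \<open>n + b \<le> K\<close>
proof (induction n arbitrary: b K)
  case 0
  have "(\<Sum>t\<le>K. smult (cnj (wSch \<alpha> 0 b t)) (Phi \<alpha> t)) = (\<Sum>t\<le>K. if t = b then Phi \<alpha> t else 0)"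
    by (rule sum.cong) (auto simp: wSch_0)
  with 0 show ?case by simp
next
  case (Suc n)
  note Psi_exp = monom_mult_Psi_expansion[OF nz Suc.IH]
  have "monom 1 (Suc n) * Phi \<alpha> b = monom 1 n * pCons 0 (Phi \<alpha> b)"
    by (simp add: monom_Suc del: Phi.simps)
  also have "\<dots> = monom 1 n * Psi \<alpha> (Suc b) + smult (cnj (wt_H \<alpha> b)) (monom 1 n * Psi \<alpha> b)"
    by (simp only: pCons_0_Phi[OF nz] ring_distribs mult_smult_right)
  also have "\<dots> = (\<Sum>t\<le>K. smult (cnj (wSch_all \<alpha> n (Suc b) t)) (Phi \<alpha> t))
      + smult (cnj (wt_H \<alpha> b)) (\<Sum>t\<le>K. smult (cnj (wSch_all \<alpha> n b t)) (Phi \<alpha> t))"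
    using Psi_exp[of "Suc b" K] Psi_exp[of b K] Suc.prems by simp
  also have "\<dots> = (\<Sum>t\<le>K. smult (cnj (wSch \<alpha> (Suc n) b t)) (Phi \<alpha> t))"
    by (simp add: wSch_Suc smult_sum_right smult_add_left sum.distrib del: Phi.simps)
  finally show ?case .
qed

theorem theorem3p10:
  fixes \<alpha> :: "nat \<Rightarrow> complex" and c :: "int \<Rightarrow> complex"
  assumes "\<And>k. 0 < cmod (\<alpha> k) \<and> cmod (\<alpha> k) < 1"
    and "c 0 = 1"
    and "\<And>m k. m \<noteq> k \<Longrightarrow> ipL c (Phi \<alpha> m) (Phi \<alpha> k) = 0"
  shows "mu \<alpha> c n r s = (\<Sum>p\<in>Sch n r s. wtS \<alpha> (int r) p)"
proof -
  have nz: "\<And>k. \<alpha> k \<noteq> 0" and lt: "\<And>k. cmod (\<alpha> k) < 1"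
    using assms(1) by force+
  have "ipL c (Phi \<alpha> s) (monom 1 n * Phi \<alpha> r)
      = (\<Sum>t\<le>n + r + s. wSch \<alpha> n r t * ipL c (Phi \<alpha> s) (Phi \<alpha> t))"
    by (simp add: monom_mult_Phi_expansion[OF nz, of n r "n + r + s"] ipL_sum_right ipL_smult_right
        del: Phi.simps)
  also have "\<dots> = wSch \<alpha> n r s * ipL c (Phi \<alpha> s) (Phi \<alpha> s)"
    using assms(3) by (subst sum.remove[of _ s]) auto
  finally show ?thesis
    using ipL_Phi_self_nonzero[OF assms(3) assms(2) lt]
    by (simp add: mu_def wSch_def del: Phi.simps)
qed

end
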